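(* Let $M_n$ be the $n$-th Motzkin number. Then, as Laurent series in $z$, $$\sum_{n\ge0}M_nz^n=13z^{-1}+14z^{-2}+\left(9z+12+24z^{-1}+21z^{-2}\right)\Psi(z^3)+\left(9z^5+12z^4+10z^3+23z^2+25z+19+14z^{-1}+4z^{-2}\right)\Psi^3(z^3)$$ $$-\left(9z^7+3z^6+24z^5+30z^4+6z^3+21z^2+6z+3+24z^{-1}+12z^{-2}\right)\Psi^5(z^3)\quad\text{modulo }27.$$
   Context: $M_n$ is the number of lattice paths from $(0,0)$ to $(n,0)$ with steps $(1,0),(1,1),(1,-1)$ never going below the $x$-axis; equivalently $\sum_n M_nz^n=\frac{1-z-\sqrt{1-2z-3z^2}}{2z^2}$. $\Psi(z)=\prod_{j\ge0}(1+z^{3^j})$. "Modulo $27$" means coefficientwise congruence of Laurent series. *)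

theory Defs
  imports "HOL-Computational_Algebra.Formal_Laurent_Series" "HOL-Number_Theory.Cong"
begin

text \<open>Motzkin paths of length n: step sequences over {-1,0,1} (steps (1,-1),(1,0),(1,1))
  that never go below the x-axis and end on it.\<close>
definition motzkin_paths :: "nat \<Rightarrow> int list set" where
  "motzkin_paths n = {xs. length xs = n \<and> set xs \<subseteq> {-1, 0, 1}
      \<and> (\<forall>k\<le>n. sum_list (take k xs) \<ge> 0) \<and> sum_list xs = 0}"

definition motzkin :: "nat \<Rightarrow> nat" where
  "motzkin n = card (motzkin_paths n)"

text \<open>Psi(z) = prod_{j>=0} (1 + z^(3^j)) as a formal power series: the coefficient of z^m
  of the infinite product equals that of the partial product over j < m+1 (later factors
  are 1 + O(z^(m+1))).\<close>
definition Psi :: "int fps" where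
  "Psi = Abs_fps (\<lambda>m. fps_nth (\<Prod>j<m+1. (1 + fps_X ^ (3 ^ j))) m)"

end

theory Submission
  imports Defs
begin

text \<open>
  Put \<open>s = z\<^sup>2 M(z)\<close>; the Motzkin recurrence says \<open>s\<^sup>2 + (z - 1) s + z\<^sup>2 = 0\<close>.
  The claimed right-hand side times \<open>z\<^sup>2\<close> is a polynomial \<open>r\<close> in \<open>z\<close> and \<open>\<Phi> = \<Psi>(z\<^sup>3)\<close>.
  Since \<open>(1 + x)\<^sup>3 \<equiv> 1 + x\<^sup>3 (mod 3)\<close>, the product defining \<open>\<Psi>\<close> telescopes to
  \<open>(1 + z) \<Psi>(z)\<^sup>2 \<equiv> 1 (mod 3)\<close>, so \<open>(1 + z\<^sup>3) \<Phi>\<^sup>2 = 1 + 3U\<close>. Substituting this into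
  \<open>(1 + z\<^sup>3)\<^sup>5 (r\<^sup>2 + (z - 1) r + z\<^sup>2)\<close> gives a polynomial in \<open>z\<close> and \<open>U\<close> with all
  coefficients divisible by 27, so \<open>r\<close> is a root of the same quadratic modulo 27. Hence
  \<open>(r - s)(r + s + z - 1) \<equiv> 0 (mod 27)\<close>, and the second factor has constant term 26, a unit
  modulo 27, so \<open>r \<equiv> s\<close>.
\<close>

section \<open>Coefficientwise divisibility of power series\<close>

lemma fps_const_dvd_iff:
  fixes f :: "'a::comm_ring_1 fps"
  shows "fps_const c dvd f \<longleftrightarrow> (\<forall>n. c dvd f $ n)"
proof
  assume "fps_const c dvd f"
  then show "\<forall>n. c dvd f $ n" by (auto elim!: dvdE)
next
  assume "\<forall>n. c dvd f $ n"
  then have "f = fps_const c * Abs_fps (\<lambda>n. SOME k. f $ n = c * k)"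
    by (intro fps_ext) (metis (mono_tags) dvd_def fps_mult_left_const_nth fps_nth_Abs_fps someI_ex)
  then show "fps_const c dvd f" by (rule dvdI)
qed

lemma fps_const_dvd_mult_cancel:
  fixes c f :: "int fps"
  assumes "coprime m (c $ 0)" and "fps_const m dvd c * f"
  shows "fps_const m dvd f"
  unfolding fps_const_dvd_iff
proof
  fix n show "m dvd f $ n"
  proof (induction n rule: less_induct)
    case (less n)
    have "(c * f) $ n = c $ 0 * f $ n + (\<Sum>i=1..n. c $ i * f $ (n - i))"
      by (simp add: fps_mult_nth sum.atLeast_Suc_atMost)
    moreover have "m dvd (\<Sum>i=1..n. c $ i * f $ (n - i))"
      by (rule dvd_sum) (use less in auto)
    moreover have "m dvd (c * f) $ n"
      using assms(2) by (simp add: fps_const_dvd_iff)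
    ultimately have "m dvd c $ 0 * f $ n"
      by (metis dvd_add_left_iff)
    then show ?case
      using assms(1) by (simp add: coprime_dvd_mult_right_iff)
  qed
qed

lemma fps_mult_nth_cong: "(\<And>j. j \<le> n \<Longrightarrow> f $ j = g $ j) \<Longrightarrow> (h * f) $ n = (h * g) $ n"
  by (simp add: fps_mult_nth)

section \<open>The Motzkin generating function\<close>

lemma sum_list_take_Cons:
  "sum_list (take k (x # xs)) = (if k = 0 then 0 else x + sum_list (take (k - 1) xs))"
  by (cases k) auto

lemma finite_motzkin_paths: "finite (motzkin_paths n)"
proof (rule finite_subset)
  show "motzkin_paths n \<subseteq> {xs. set xs \<subseteq> {-1, 0, 1} \<and> length xs = n}"
    by (auto simp: motzkin_paths_def)
  show "finite {xs. set xs \<subseteq> {-1::int, 0, 1} \<and> length xs = n}"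
    by (rule finite_lists_length_eq) simp
qed

lemma motzkin_0: "motzkin 0 = 1"
proof -
  have "motzkin_paths 0 = {[]}" by (auto simp: motzkin_paths_def)
  then show ?thesis by (simp add: motzkin_def)
qed

lemma motzkin_1: "motzkin (Suc 0) = 1"
proof -
  have "motzkin_paths (Suc 0) = {[0]}"
  proof (intro equalityI subsetI)
    fix xs assume "xs \<in> motzkin_paths (Suc 0)"
    then have "length xs = 1" "sum_list xs = 0" by (auto simp: motzkin_paths_def)
    then show "xs \<in> {[0]}" by (cases xs) auto
  qed (auto simp: motzkin_paths_def sum_list_take_Cons)
  then show ?thesis by (simp add: motzkin_def)
qed

lemma Cons_0_in_motzkin_paths_iff:
  "0 # xs \<in> motzkin_paths (Suc n) \<longleftrightarrow> xs \<in> motzkin_paths n"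
proof -
  have "(\<forall>k\<le>Suc n. 0 \<le> sum_list (take k (0 # xs))) \<longleftrightarrow> (\<forall>k\<le>n. 0 \<le> sum_list (take k xs))"
    by (auto simp: sum_list_take_Cons)
  then show ?thesis by (auto simp: motzkin_paths_def)
qed

lemma arch_in_motzkin_paths:
  assumes "xs \<in> motzkin_paths a" "ys \<in> motzkin_paths b"
  shows "1 # xs @ (-1) # ys \<in> motzkin_paths (a + b + 2)"
  unfolding motzkin_paths_def
proof (intro CollectI conjI allI impI)
  fix k assume k: "k \<le> a + b + 2"
  have xs: "length xs = a" "sum_list xs = 0" "\<And>i. i \<le> a \<Longrightarrow> sum_list (take i xs) \<ge> 0"
    and ys: "\<And>i. i \<le> b \<Longrightarrow> sum_list (take i ys) \<ge> 0"
    using assms by (auto simp: motzkin_paths_def)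
  show "sum_list (take k (1 # xs @ (-1) # ys)) \<ge> 0"
  proof (cases "k \<le> Suc a")
    case True
    then show ?thesis using xs by (cases "k = Suc a") (auto simp: sum_list_take_Cons)
  next
    case False
    then have "sum_list (take k (1 # xs @ (-1) # ys)) = sum_list (take (k - a - 2) ys)"
      using xs by (simp add: sum_list_take_Cons)
    then show ?thesis using ys[of "k - a - 2"] k by simp
  qed
qed (use assms in \<open>auto simp: motzkin_paths_def\<close>)

lemma arch_prefix_sum_eq_0_iff:
  assumes "xs \<in> motzkin_paths a" "k \<le> Suc a"
  shows "sum_list (take (Suc k) (1 # xs @ (-1) # ys)) = 0 \<longleftrightarrow> k = Suc a"
proof -
  have xs: "length xs = a" "sum_list xs = 0" "\<And>i. i \<le> a \<Longrightarrow> sum_list (take i xs) \<ge> 0"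
    using assms by (auto simp: motzkin_paths_def)
  show ?thesis
  proof (cases "k = Suc a")
    case False
    then have "k \<le> a" using assms(2) by simp
    then show ?thesis using xs(1) xs(3)[of k] False by simp
  qed (use xs in simp)
qed

lemma arch_inj:
  assumes "xs \<in> motzkin_paths a" "xs' \<in> motzkin_paths a'"
    and "1 # xs @ (-1) # ys = 1 # xs' @ (-1) # ys'"
  shows "xs = xs' \<and> ys = ys'"
proof -
  have not_less: "\<not> a < a'"
    if "xs \<in> motzkin_paths a" "xs' \<in> motzkin_paths a'"
      "1 # xs @ (-1) # ys = 1 # xs' @ (-1) # ys'" for a a' xs xs' ys ys'
    using that arch_prefix_sum_eq_0_iff[of xs a "Suc a" ys]
      arch_prefix_sum_eq_0_iff[of xs' a' "Suc a" ys'] by auto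
  have "a = a'"
    using not_less[OF assms] not_less[OF assms(2,1) assms(3)[symmetric]] by simp
  then have "length xs = length xs'"
    using assms(1,2) by (simp add: motzkin_paths_def)
  then show ?thesis using assms(3) by simp
qed

lemma motzkin_path_first_step:
  assumes "zs \<in> motzkin_paths (Suc n)"
  obtains t where "zs = 0 # t" | t where "zs = 1 # t"
proof -
  from assms have "length zs = Suc n" "set zs \<subseteq> {-1, 0, 1}" "sum_list (take 1 zs) \<ge> 0"
    by (auto simp: motzkin_paths_def)
  then obtain x t where "zs = x # t" "x \<in> {-1, 0, 1}" "x \<ge> 0" by (cases zs) auto
  then show ?thesis using that by auto
qed

lemma take_in_motzkin_paths:
  assumes "set t \<subseteq> {-1, 0, 1}" "j \<le> length t"
    and "\<And>i. i \<le> j \<Longrightarrow> sum_list (take i t) \<ge> 0" "sum_list (take j t) = 0"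
  shows "take j t \<in> motzkin_paths j"
  using assms set_take_subset[of j t]
  by (auto simp: motzkin_paths_def min_def)

lemma drop_in_motzkin_paths:
  assumes "set t \<subseteq> {-1, 0, 1}" "j \<le> length t"
    and "\<And>i. i \<le> length t \<Longrightarrow> sum_list (take i t) \<ge> c" "sum_list (take j t) = c"
    and "sum_list t = c"
  shows "drop j t \<in> motzkin_paths (length t - j)"
  unfolding motzkin_paths_def
proof (intro CollectI conjI allI impI)
  fix i assume "i \<le> length t - j"
  then have "sum_list (take (j + i) t) \<ge> c" using assms(2,3) by simp
  then show "sum_list (take i (drop j t)) \<ge> 0"
    using assms(4) by (simp add: take_add)
next
  show "sum_list (drop j t) = 0"
    using assms(4,5) by (metis append_take_drop_id sum_list_append add_left_cancel add_0_right)
qed (use assms(1) set_drop_subset[of j t] in auto)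

lemma motzkin_path_first_return:
  assumes "1 # t \<in> motzkin_paths (Suc (Suc n))"
  obtains k xs ys where "k \<le> n" "xs \<in> motzkin_paths k" "ys \<in> motzkin_paths (n - k)"
    "t = xs @ (-1) # ys"
proof -
  define q where "q i = sum_list (take i t)" for i
  have t: "length t = Suc n" "set t \<subseteq> {-1, 0, 1}" "sum_list t = -1"
    using assms by (auto simp: motzkin_paths_def)
  have q_ge: "q i \<ge> -1" if "i \<le> Suc n" for i
  proof -
    have "\<forall>k\<le>Suc (Suc n). sum_list (take k (1 # t)) \<ge> 0"
      using assms by (simp add: motzkin_paths_def)
    then show ?thesis using that by (auto simp: q_def dest: spec[of _ "Suc i"])
  qed
  have "q (Suc n) = -1" using t by (simp add: q_def)
  \<comment> \<open>The path first returns to the axis at step \<open>j + 1\<close>.\<close>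
  define j where "j = (LEAST i. q i = -1)"
  have qj: "q j = -1"
    unfolding j_def by (rule LeastI[of "\<lambda>i. q i = -1"]) fact
  have j_le: "j \<le> Suc n"
    unfolding j_def by (rule Least_le) fact
  have q_before: "q i \<ge> 0" if "i < j" for i
  proof -
    have "q i \<noteq> -1"
      using not_less_Least[of i "\<lambda>i. q i = -1"] that unfolding j_def by blast
    then show ?thesis using q_ge[of i] that j_le by simp
  qed
  obtain j' where j': "j = Suc j'"
    using qj by (cases j) (simp_all add: q_def)
  have "j' < length t" using t j' j_le by simp
  then have "t ! j' \<in> {-1, 0, 1}" using t(2) nth_mem by blast
  moreover have "q j = q j' + t ! j'"
    using \<open>j' < length t\<close> j' by (simp add: q_def take_Suc_conv_app_nth)
  ultimately have qj': "q j' = 0" and step: "t ! j' = -1"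
    using qj q_before[of j'] j' by auto
  have "take j' t \<in> motzkin_paths j'"
    using t j' j_le q_before qj' by (intro take_in_motzkin_paths) (auto simp: q_def)
  moreover have "drop j t \<in> motzkin_paths (n - j')"
    using drop_in_motzkin_paths[of t j "-1"] t j' j_le q_ge qj by (simp add: q_def)
  moreover have "t = take j' t @ (-1) # drop j t"
    using id_take_nth_drop[of j' t] t j' j_le step by simp
  ultimately show ?thesis
    using that j' j_le by simp
qed

lemma motzkin_paths_Suc_Suc:
  "motzkin_paths (Suc (Suc n)) = Cons 0 ` motzkin_paths (Suc n)
     \<union> (\<lambda>(k, xs, ys). 1 # xs @ (-1) # ys) ` (SIGMA k:{..n}. motzkin_paths k \<times> motzkin_paths (n - k))"
  (is "_ = _ \<union> ?arch ` ?S")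
proof (intro equalityI subsetI)
  fix zs assume zs: "zs \<in> motzkin_paths (Suc (Suc n))"
  then show "zs \<in> Cons 0 ` motzkin_paths (Suc n) \<union> ?arch ` ?S"
  proof (cases rule: motzkin_path_first_step)
    case (1 t)
    then show ?thesis using zs Cons_0_in_motzkin_paths_iff by blast
  next
    case (2 t)
    with zs have "1 # t \<in> motzkin_paths (Suc (Suc n))" by simp
    then obtain k xs ys where "k \<le> n" "xs \<in> motzkin_paths k" "ys \<in> motzkin_paths (n - k)"
      "t = xs @ (-1) # ys"
      by (rule motzkin_path_first_return)
    then have "zs = ?arch (k, xs, ys)" "(k, xs, ys) \<in> ?S"
      using 2 by auto
    then show ?thesis by blast
  qed
next
  fix zs assume "zs \<in> Cons 0 ` motzkin_paths (Suc n) \<union> ?arch ` ?S"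
  then consider t where "t \<in> motzkin_paths (Suc n)" "zs = 0 # t"
    | k xs ys where "k \<le> n" "xs \<in> motzkin_paths k" "ys \<in> motzkin_paths (n - k)"
        "zs = 1 # xs @ (-1) # ys"
    by auto
  then show "zs \<in> motzkin_paths (Suc (Suc n))"
  proof cases
    case 1
    then show ?thesis by (simp add: Cons_0_in_motzkin_paths_iff)
  next
    case (2 k xs ys)
    then show ?thesis using arch_in_motzkin_paths[of xs k ys "n - k"] by simp
  qed
qed

lemma inj_on_arch:
  "inj_on (\<lambda>(k, xs, ys). 1 # xs @ (-1) # ys) (SIGMA k:K. motzkin_paths k \<times> Y k)"
proof (rule inj_onI)
  fix u v
  assume "u \<in> (SIGMA k:K. motzkin_paths k \<times> Y k)" "v \<in> (SIGMA k:K. motzkin_paths k \<times> Y k)"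
    and "(\<lambda>(k, xs, ys). 1 # xs @ (-1) # ys) u = (\<lambda>(k, xs, ys). 1 # xs @ (-1) # ys) v"
  then obtain k xs ys k' xs' ys' where u: "u = (k, xs, ys)" "xs \<in> motzkin_paths k"
    and v: "v = (k', xs', ys')" "xs' \<in> motzkin_paths k'"
    and "1 # xs @ (-1) # ys = 1 # xs' @ (-1) # ys'"
    by auto
  then have "xs = xs'" "ys = ys'" by (blast dest: arch_inj)+
  moreover have "k = length xs" "k' = length xs'"
    using u v by (simp_all add: motzkin_paths_def)
  ultimately show "u = v" using u v by simp
qed

lemma motzkin_Suc_Suc:
  "motzkin (Suc (Suc n)) = motzkin (Suc n) + (\<Sum>k\<le>n. motzkin k * motzkin (n - k))"
proof -
  define S where "S = (SIGMA k:{..n}. motzkin_paths k \<times> motzkin_paths (n - k))"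
  have "finite S"
    by (auto simp: S_def finite_motzkin_paths)
  then have "motzkin (Suc (Suc n)) = card (Cons 0 ` motzkin_paths (Suc n)) + card S"
    unfolding motzkin_def motzkin_paths_Suc_Suc S_def[symmetric] using inj_on_arch[of "{..n}"]
    by (subst card_Un_disjoint) (auto simp: card_image finite_motzkin_paths S_def)
  also have "card S = (\<Sum>k\<le>n. motzkin k * motzkin (n - k))"
    by (simp add: S_def motzkin_def card_SigmaI card_cartesian_product finite_motzkin_paths)
  finally show ?thesis
    by (simp add: motzkin_def card_image)
qed

definition motzkin_fps :: "'a::comm_ring_1 fps" where
  "motzkin_fps = Abs_fps (\<lambda>n. of_nat (motzkin n))"

lemma motzkin_fps_equation:
  "fps_X^2 * motzkin_fps^2 + (fps_X - 1) * motzkin_fps + 1 = (0 :: 'a::comm_ring_1 fps)"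
proof (rule fps_ext)
  fix n
  let ?M = "motzkin_fps :: 'a fps"
  have M: "?M $ k = of_nat (motzkin k)" for k
    by (simp add: motzkin_fps_def)
  have M2: "(?M^2) $ k = of_nat (\<Sum>i\<le>k. motzkin i * motzkin (k - i))" for k
    by (simp add: power2_eq_square fps_mult_nth M atLeast0AtMost)
  have "(fps_X^2 * ?M^2 + (fps_X - 1) * ?M + 1) $ n
      = (if n < 2 then 0 else (?M^2) $ (n - 2)) + (if n = 0 then 0 else ?M $ (n - 1))
        - ?M $ n + (if n = 0 then 1 else 0)"
    by (simp add: fps_X_power_mult_nth algebra_simps)
  also have "\<dots> = 0"
  proof (cases n)
    case 0
    then show ?thesis by (simp add: M motzkin_0)
  next
    case (Suc m)
    then show ?thesis
      by (cases m) (simp_all add: M M2 motzkin_Suc_Suc motzkin_0 motzkin_1)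
  qed
  finally show "(fps_X^2 * ?M^2 + (fps_X - 1) * ?M + 1) $ n = 0 $ n" by simp
qed

section \<open>The product \<open>\<Psi>\<close> modulo 3\<close>

lemma less_three_power: "n < (3::nat) ^ n"
  by (induction n) simp_all

definition psi_partial :: "nat \<Rightarrow> 'a::comm_ring_1 fps" where
  "psi_partial k = (\<Prod>j<k. 1 + fps_X ^ (3 ^ j))"

lemma psi_partial_Suc: "psi_partial (Suc k) = psi_partial k * (1 + fps_X ^ (3 ^ k))"
  by (simp add: psi_partial_def)

lemma psi_partial_square_mod3:
  "(3 :: 'a::idom fps) dvd (1 + fps_X) * psi_partial k ^ 2 - (1 + fps_X ^ (3 ^ k))"
proof (induction k)
  case 0
  show ?case by (simp add: psi_partial_def)
next
  case (Suc k)
  define t :: "'a fps" where "t = fps_X ^ (3 ^ k)"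
  have t3: "fps_X ^ (3 ^ Suc k) = t ^ 3"
    by (simp add: t_def power_mult[symmetric] mult.commute)
  have "(1 + fps_X) * psi_partial (Suc k) ^ 2 - (1 + fps_X ^ (3 ^ Suc k))
      = ((1 + fps_X) * psi_partial k ^ 2 - (1 + t)) * (1 + t)^2 + 3 * (t + t^2)"
    unfolding psi_partial_Suc t_def[symmetric] t3 by algebra
  then show ?case
    using Suc.IH unfolding t_def by (metis dvd_add dvd_mult2 dvd_triv_left)
qed

lemma psi_partial_nth_mono:
  assumes "n < 3 ^ k" "k \<le> k'"
  shows "psi_partial k' $ n = psi_partial k $ n"
  using assms(2)
proof (induction k' rule: dec_induct)
  case (step m)
  have "n < 3 ^ m"
    using assms(1) step(1) by (meson less_le_trans one_le_numeral power_increasing)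
  then show ?case
    using step(3) by (simp add: psi_partial_Suc algebra_simps fps_X_power_mult_right_nth)
qed simp

lemma Psi_nth_eq_psi_partial:
  assumes "n < 3 ^ k"
  shows "Psi $ n = psi_partial k $ n"
proof -
  have "Psi $ n = psi_partial (Suc n) $ n"
    by (simp add: Psi_def psi_partial_def)
  also have "\<dots> = psi_partial (max k (Suc n)) $ n"
    by (rule psi_partial_nth_mono[symmetric]) (use less_three_power[of n] in simp_all)
  also have "\<dots> = psi_partial k $ n"
    by (rule psi_partial_nth_mono[OF assms]) simp
  finally show ?thesis .
qed

lemma Psi_square_mod3: "3 dvd (1 + fps_X) * Psi^2 - 1"
  unfolding numeral_fps_const fps_const_dvd_iff
proof
  fix n
  define P :: "int fps" where "P = psi_partial (Suc n)"
  have agree: "Psi $ j = P $ j" if "j \<le> n" for j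
    using that less_three_power[of n] unfolding P_def
    by (intro Psi_nth_eq_psi_partial) simp
  have "((1 + fps_X) * Psi * Psi) $ n = ((1 + fps_X) * Psi * P) $ n"
    using agree by (rule fps_mult_nth_cong)
  also have "\<dots> = ((1 + fps_X) * P * Psi) $ n"
    by (simp add: ac_simps)
  also have "\<dots> = ((1 + fps_X) * P * P) $ n"
    using agree by (rule fps_mult_nth_cong)
  finally have "((1 + fps_X) * Psi^2) $ n = ((1 + fps_X) * P^2) $ n"
    by (simp add: power2_eq_square mult.assoc)
  moreover have "(fps_X ^ (3 ^ Suc n) :: int fps) $ n = 0"
    using less_three_power[of "Suc n"] by simp
  ultimately have "((1 + fps_X) * Psi^2 - 1) $ n
      = ((1 + fps_X) * P^2 - (1 + fps_X ^ (3 ^ Suc n))) $ n"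
    by simp
  moreover have "3 dvd ((1 + fps_X) * P^2 - (1 + fps_X ^ (3 ^ Suc n))) $ n"
    using psi_partial_square_mod3[of "Suc n", where 'a=int]
    unfolding P_def numeral_fps_const fps_const_dvd_iff by blast
  ultimately show "3 dvd ((1 + fps_X) * Psi^2 - 1) $ n" by (simp only:)
qed

lemma Psi_X3_square_mod3: "3 dvd (1 + fps_X^3) * (Psi oo fps_X^3)^2 - 1"
proof -
  have X3: "(fps_X ^ 3 :: int fps) $ 0 = 0" by simp
  obtain U where "(1 + fps_X) * Psi^2 - 1 = 3 * U"
    using Psi_square_mod3 by (elim dvdE)
  then have "((1 + fps_X) * Psi^2 - 1) oo fps_X^3 = 3 * (U oo fps_X^3)"
    by (simp add: fps_compose_mult_distrib[OF X3])
  then show ?thesis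
    by (simp add: fps_compose_sub_distrib fps_compose_add_distrib
        fps_compose_mult_distrib[OF X3] fps_compose_power[OF X3])
qed

section \<open>A root of the Motzkin equation modulo 27\<close>

text \<open>\<open>z\<^sup>2\<close> times the right-hand side of the theorem, with \<open>\<Psi>(z\<^sup>3)\<close> replaced by \<open>p\<close>.\<close>

definition motzkin_mod27_poly :: "'a::comm_ring_1 \<Rightarrow> 'a \<Rightarrow> 'a" where
  "motzkin_mod27_poly z p = 13*z + 14 + (21 + 24*z + 12*z^2 + 9*z^3) * p
     + (4 + 14*z + 19*z^2 + 25*z^3 + 23*z^4 + 10*z^5 + 12*z^6 + 9*z^7) * p^3
     - (12 + 24*z + 3*z^2 + 6*z^3 + 21*z^4 + 6*z^5 + 30*z^6 + 24*z^7 + 3*z^8 + 9*z^9) * p^5"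

lemma dvd_27_expansion_in_3U:
  fixes a A B C U :: "'a::idom"
  assumes "27 dvd a + A^2" "9 dvd A^2 + 2*A*B" "3 dvd 2*A*B + B^2 + 2*A*C"
  shows "27 dvd a + (1 + 3*U) * (A + 3*U*B + 9*U^2*C)^2"
proof -
  obtain k0 k1 k2 where "a + A^2 = 27*k0" "A^2 + 2*A*B = 9*k1" "2*A*B + B^2 + 2*A*C = 3*k2"
    using assms by (elim dvdE)
  then have "a + (1 + 3*U) * (A + 3*U*B + 9*U^2*C)^2
      = 27 * (k0 + U*k1 + U^2*k2 + U^3 * (B^2 + 2*A*C + 2*B*C + 3*U*(2*B*C + C^2) + 9*U^2*C^2))"
    by algebra
  then show ?thesis by (rule dvdI)
qed

lemma motzkin_mod27_poly_quadratic_dvd: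
  fixes z p :: "'a::idom"
  assumes "3 dvd (1 + z^3) * p^2 - 1"
  shows "27 dvd (1 + z^3)^5 *
    (motzkin_mod27_poly z p ^ 2 + (z - 1) * motzkin_mod27_poly z p + z^2)"
proof -
  define w where "w = 1 + z^3"
  obtain U where U: "w * p^2 = 1 + 3*U"
    using assms unfolding w_def by (metis dvd_def diff_eq_eq add.commute)
  define e where "e = 182 + 365*z + 183*z^2"
  define b0 where "b0 = 21 + 24*z + 12*z^2 + 9*z^3"
  define b1 where "b1 = 4 + 14*z + 19*z^2 + 25*z^3 + 23*z^4 + 10*z^5 + 12*z^6 + 9*z^7"
  define b2 where "b2 = - (12 + 24*z + 3*z^2 + 6*z^3 + 21*z^4 + 6*z^5 + 30*z^6 + 24*z^7
      + 3*z^8 + 9*z^9)"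
  define b where "b = b0 + b1*p^2 + b2*p^4"
  define A where "A = b0*w^2 + b1*w + b2"
  define B where "B = b1*w + 2*b2"
  \<comment> \<open>Clearing the denominator \<open>w\<^sup>5\<close> turns the quadratic into a polynomial in \<open>w p\<^sup>2 = 1 + 3U\<close>.\<close>
  have "w^5 * (motzkin_mod27_poly z p ^ 2 + (z - 1) * motzkin_mod27_poly z p + z^2)
      = w^5*e + (w*p^2) * (b0*w^2 + b1*w*(w*p^2) + b2*(w*p^2)^2)^2
        + 27 * (w^5 * (z + 1) * p * b)"
    unfolding motzkin_mod27_poly_def e_def b_def b0_def b1_def b2_def by algebra
  also have "\<dots> = w^5*e + (1 + 3*U) * (A + 3*U*B + 9*U^2*b2)^2 + 27 * (w^5 * (z + 1) * p * b)"
    unfolding U A_def B_def by algebra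
  finally have expansion: "w^5 * (motzkin_mod27_poly z p ^ 2 + (z - 1) * motzkin_mod27_poly z p + z^2)
      = w^5*e + (1 + 3*U) * (A + 3*U*B + 9*U^2*b2)^2 + 27 * (w^5 * (z + 1) * p * b)" .
  have "w^5*e + A^2 = 27 * (13 + 27*z + 41*z^2 + 134*z^3 + 235*z^4 + 299*z^5 + 496*z^6
      + 662*z^7 + 624*z^8 + 640*z^9 + 671*z^10 + 518*z^11 + 398*z^12 + 349*z^13 + 221*z^14
      + 124*z^15 + 86*z^16 + 45*z^17 + 18*z^18 + 8*z^19 + 3*z^20)"
    unfolding w_def e_def A_def b0_def b1_def b2_def by algebra
  moreover have "A^2 + 2*A*B = 9 * (- 39 - 120*z - 90*z^2 - 150*z^3 - 222*z^4 + 456*z^5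
      + 1146*z^6 + 1374*z^7 + 1680*z^8 + 1494*z^9 + 1221*z^10 + 1116*z^11 + 876*z^12
      + 714*z^13 + 492*z^14 + 318*z^15 + 195*z^16 + 132*z^17 + 84*z^18 + 36*z^19 + 27*z^20)"
    unfolding w_def A_def B_def b0_def b1_def b2_def by algebra
  moreover have "2*A*B + B^2 + 2*A*b2 = 3 * (- 144 - 348*z - 840*z^2 - 2994*z^3 - 4425*z^4
      - 2892*z^5 - 2697*z^6 - 2772*z^7 - 2601*z^8 - 4734*z^9 - 4983*z^10 - 4278*z^11
      - 3363*z^12 - 2112*z^13 - 1722*z^14 - 870*z^15 - 738*z^16 - 342*z^17 + 36*z^18
      - 54*z^19 + 81*z^20)"
    unfolding w_def A_def B_def b0_def b1_def b2_def by algebra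
  ultimately have "27 dvd w^5*e + (1 + 3*U) * (A + 3*U*B + 9*U^2*b2)^2"
    by (intro dvd_27_expansion_in_3U) (simp_all only: dvd_triv_left)
  then show ?thesis
    unfolding w_def[symmetric] expansion by simp
qed

lemma motzkin_mod27_poly_Psi_X3_cong:
  "27 dvd motzkin_mod27_poly fps_X (Psi oo fps_X^3) - fps_X^2 * motzkin_fps"
proof -
  define r where "r = motzkin_mod27_poly fps_X (Psi oo fps_X^3)"
  define s :: "int fps" where "s = fps_X^2 * motzkin_fps"
  have "27 dvd (1 + fps_X^3)^5 * (r^2 + (fps_X - 1) * r + fps_X^2)"
    unfolding r_def by (rule motzkin_mod27_poly_quadratic_dvd[OF Psi_X3_square_mod3])
  then have r_root: "27 dvd r^2 + (fps_X - 1) * r + fps_X^2"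
    unfolding numeral_fps_const
    by (rule fps_const_dvd_mult_cancel[rotated]) (simp add: fps_nth_power_0)
  have s_root: "s^2 + (fps_X - 1) * s + fps_X^2 = 0"
  proof -
    have "s^2 + (fps_X - 1) * s + fps_X^2
        = fps_X^2 * (fps_X^2 * motzkin_fps^2 + (fps_X - 1) * motzkin_fps + 1)"
      unfolding s_def by algebra
    then show ?thesis by (simp add: motzkin_fps_equation)
  qed
  have "(r + s + fps_X - 1) * (r - s)
      = (r^2 + (fps_X - 1) * r + fps_X^2) - (s^2 + (fps_X - 1) * s + fps_X^2)"
    by algebra
  then have dvd_product: "fps_const 27 dvd (r + s + fps_X - 1) * (r - s)"
    using r_root s_root by (simp add: numeral_fps_const)
  have "Psi $ 0 = 1"
    by (simp add: Psi_def)
  then have "(r + s + fps_X - 1) $ 0 = 26"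
    by (simp add: r_def s_def motzkin_mod27_poly_def fps_nth_power_0)
  then have "coprime 27 ((r + s + fps_X - 1) $ 0)"
    using coprime_doff_one_right[of "27::int"] by simp
  from fps_const_dvd_mult_cancel[OF this dvd_product] show ?thesis
    unfolding r_def s_def numeral_fps_const .
qed

lemma fps_to_fls_motzkin_mod27_poly:
  fixes f :: "'a::comm_ring_1 fps"
  shows "fps_to_fls (motzkin_mod27_poly fps_X f) = motzkin_mod27_poly fls_X (fps_to_fls f)"
  by (simp add: motzkin_mod27_poly_def fls_times_fps_to_fls fps_to_fls_power)

lemma motzkin_mod27_poly_shift:
  fixes z zi p :: "'a::idom"
  assumes "z * zi = 1"
  shows "13 * zi + 14 * zi^2
      + (9 * z + 12 + 24 * zi + 21 * zi^2) * p
      + (9 * z^5 + 12 * z^4 + 10 * z^3 + 23 * z^2 + 25 * z + 19 + 14 * zi + 4 * zi^2) * p^3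
      - (9 * z^7 + 3 * z^6 + 24 * z^5 + 30 * z^4 + 6 * z^3 + 21 * z^2 + 6 * z + 3
           + 24 * zi + 12 * zi^2) * p^5
    = zi^2 * motzkin_mod27_poly z p"
proof -
  define E0 where "E0 = (9*z + 12)*p + (9*z^5 + 12*z^4 + 10*z^3 + 23*z^2 + 25*z + 19)*p^3
      - (9*z^7 + 3*z^6 + 24*z^5 + 30*z^4 + 6*z^3 + 21*z^2 + 6*z + 3)*p^5"
  define E1 where "E1 = 13 + 24*p + 14*p^3 - 24*p^5"
  define E2 where "E2 = 14 + 21*p + 4*p^3 - 12*p^5"
  have "motzkin_mod27_poly z p = z^2 * E0 + z * E1 + E2"
    unfolding motzkin_mod27_poly_def E0_def E1_def E2_def by algebra
  then have "zi^2 * motzkin_mod27_poly z p = (z*zi)^2 * E0 + (z*zi) * zi * E1 + zi^2 * E2"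
    by algebra
  also have "\<dots> = E0 + zi * E1 + zi^2 * E2"
    using assms by simp
  finally show ?thesis
    unfolding E0_def E1_def E2_def by algebra
qed

theorem theorem7p2:
  fixes z zi :: "int fls"
  defines "z \<equiv> fls_X" and "zi \<equiv> fls_X_inv"
  defines "P \<equiv> fps_to_fls (Psi oo (fps_X ^ 3))"
  shows "\<forall>n::int. [fls_nth (fps_to_fls (Abs_fps (\<lambda>n. int (motzkin n)))) n =
     fls_nth
     (13 * zi + 14 * zi^2
      + (9 * z + 12 + 24 * zi + 21 * zi^2) * P
      + (9 * z^5 + 12 * z^4 + 10 * z^3 + 23 * z^2 + 25 * z + 19 + 14 * zi + 4 * zi^2) * P^3
      - (9 * z^7 + 3 * z^6 + 24 * z^5 + 30 * z^4 + 6 * z^3 + 21 * z^2 + 6 * z + 3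
           + 24 * zi + 12 * zi^2) * P^5) n] (mod 27)"
proof -
  let ?M = "motzkin_fps :: int fps"
  have zzi: "z * zi = 1"
    by (simp add: z_def zi_def fls_X_inv_times_conv_shift)
  obtain K where K: "motzkin_mod27_poly fps_X (Psi oo fps_X^3) = fps_X^2 * ?M + 27 * K"
    using motzkin_mod27_poly_Psi_X3_cong by (metis dvdE diff_eq_eq add.commute)
  have "zi^2 * motzkin_mod27_poly z P
      = zi^2 * fps_to_fls (motzkin_mod27_poly fps_X (Psi oo fps_X^3))"
    by (simp add: z_def P_def fps_to_fls_motzkin_mod27_poly)
  also have "\<dots> = zi^2 * fps_to_fls (fps_X^2 * ?M + 27 * K)"
    by (simp only: K)
  also have "\<dots> = (z * zi)^2 * fps_to_fls ?M + 27 * (zi^2 * fps_to_fls K)"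
    by (simp add: z_def fls_times_fps_to_fls fps_to_fls_power algebra_simps)
  finally have "zi^2 * motzkin_mod27_poly z P = fps_to_fls ?M + 27 * (zi^2 * fps_to_fls K)"
    by (simp add: zzi)
  then show ?thesis
    unfolding motzkin_mod27_poly_shift[OF zzi]
    by (simp add: motzkin_fps_def cong_iff_dvd_diff)
qed

end
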